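(* Let $\mathcal{P}$ be a partition of $\{1,\dots,n\}$ and $\mathcal{U}$ a subspace of $\mathbb{R}^n$. If $\mu_{\mathcal{P}}(\mathcal{U})<1/2$ then $\mathcal{U}$ is $\mathcal{P}$-realizable.
   Context: $P_{\mathcal{U}}$ is the orthogonal projector onto $\mathcal{U}$. For $\mathcal{I}\subseteq\{1,\dots,n\}$, $S^{\mathcal{I}}=\{x\in\mathbb{R}^n:\|x\|_2=1,\ x_j=0\text{ for }j\notin\mathcal{I}\}$. The $\mathcal{P}$-coherence is $\mu_{\mathcal{P}}(\mathcal{U})=\max_{\mathcal{I}\in\mathcal{P}}\max_{x\in S^{\mathcal{I}}}\|P_{\mathcal{U}}x\|_2^2$. $\mathcal{E}_{\mathcal{P}}=\{Y\succeq0: Y_{\mathcal{I}}=I\text{ for all }\mathcal{I}\in\mathcal{P}\}$ ($Y_{\mathcal{I}}$ the principal submatrix indexed by $\mathcal{I}$); $\mathcal{U}$ is $\mathcal{P}$-realizable if some $Y\in\mathcal{E}_{\mathcal{P}}$ has nullspace containing $\mathcal{U}$. *)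

theory Defs
  imports "HOL-Analysis.Analysis"
begin

text \<open>Coordinates of R^n are indexed by the finite type 'n (playing the role of {1..n}).\<close>

definition orth_proj :: "(real^'n) set \<Rightarrow> real^'n \<Rightarrow> real^'n" where
  "orth_proj U x = (THE p. p \<in> U \<and> (\<forall>u\<in>U. (x - p) \<bullet> u = 0))"

definition is_partition :: "'n set set \<Rightarrow> bool" where
  "is_partition P \<longleftrightarrow> (\<forall>I\<in>P. I \<noteq> {}) \<and> (\<forall>I\<in>P. \<forall>J\<in>P. I \<noteq> J \<longrightarrow> I \<inter> J = {}) \<and> \<Union>P = UNIV"

definition sphere_supp :: "'n set \<Rightarrow> (real^'n) set" where
  "sphere_supp I = {x. norm x = 1 \<and> (\<forall>j. j \<notin> I \<longrightarrow> x $ j = 0)}"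

text \<open>P-coherence (the maximum is attained by compactness; we write it as a supremum).\<close>
definition coherence :: "'n set set \<Rightarrow> (real^'n) set \<Rightarrow> real" where
  "coherence P U = (SUP x \<in> (\<Union>I\<in>P. sphere_supp I). (norm (orth_proj U x))\<^sup>2)"

definition psd :: "real^'n^'n \<Rightarrow> bool" where
  "psd Y \<longleftrightarrow> transpose Y = Y \<and> (\<forall>x. 0 \<le> x \<bullet> (Y *v x))"

definition elliptope_P :: "'n set set \<Rightarrow> (real^'n^'n) set" where
  "elliptope_P P = {Y. psd Y \<and> (\<forall>I\<in>P. \<forall>i\<in>I. \<forall>j\<in>I. Y $ i $ j = (if i = j then 1 else 0))}"

definition realizable :: "'n set set \<Rightarrow> (real^'n) set \<Rightarrow> bool" where
  "realizable P U \<longleftrightarrow> (\<exists>Y\<in>elliptope_P P. \<forall>u\<in>U. Y *v u = 0)"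

end

theory Submission
  imports Defs
begin

text \<open>
  Let \<open>B\<close> be the projector onto \<open>U\<close>, \<open>Q = I - B\<close>, and write \<open>Diag(X)\<close> for the
  block-diagonal part of \<open>X\<close>.  We look for \<open>Y = Q D Q\<close> with \<open>D\<close> block-diagonal and
  positive semidefinite; such a \<open>Y\<close> is PSD and kills \<open>U\<close>, so only \<open>Diag(Y) = I\<close> is needed.
  For block-diagonal \<open>D\<close> one computes \<open>Diag(Q D Q) = Diag(Q) D Diag(Q) + G(D)\<close> with
  \<open>G(D) = Diag(B D B) - Diag(B) D Diag(B)\<close>, so the condition becomes the fixed-point equation
  \<open>D = R (I - G(D)) R\<close>, \<open>R = Diag(Q)\<^sup>-\<^sup>1\<close>.  Coherence below \<open>1/2\<close> means
  \<open>Diag(B) \<le> I/2\<close>, hence \<open>Diag(Q) \<ge> I/2\<close> and \<open>\<parallel>R\<parallel> \<le> 2\<close>; a blockwise computation gives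
  \<open>0 \<le> G(D) \<le> I\<close> whenever \<open>0 \<le> D \<le> 4I\<close>.  So the map sends the compact convex set of
  block-diagonal \<open>D\<close> with \<open>0 \<le> D \<le> 4I\<close> into itself, and Brouwer's theorem gives the fixed point.
\<close>

section \<open>Symmetric matrices and quadratic forms\<close>

lemma transpose_add: "transpose (A + B) = transpose A + transpose (B::real^'n^'m)"
  by (simp add: transpose_def vec_eq_iff)

lemma transpose_diff: "transpose (A - B) = transpose A - transpose (B::real^'n^'m)"
  by (simp add: transpose_def vec_eq_iff)

lemma continuous_on_transpose: "continuous_on S (transpose :: real^'n::finite^'n \<Rightarrow> _)"
  unfolding transpose_def by (intro continuous_intros)

lemma matrix_diff_ldistrib: "(A::real^'n::finite^'n) ** (B - C) = A ** B - A ** C"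
  by (simp add: matrix_matrix_mult_def vec_eq_iff sum_subtractf right_diff_distrib)

lemma matrix_diff_rdistrib: "((A::real^'n::finite^'n) - B) ** C = A ** C - B ** C"
  by (simp add: matrix_matrix_mult_def vec_eq_iff sum_subtractf left_diff_distrib)

lemma compl_congruence_expand:
  "(mat 1 - (A::real^'n::finite^'n)) ** D ** (mat 1 - A) = D - A ** D - D ** A + A ** D ** A"
  by (simp add: matrix_diff_ldistrib matrix_diff_rdistrib matrix_mul_assoc algebra_simps)

definition quad_form :: "real^'n::finite^'n \<Rightarrow> real^'n \<Rightarrow> real" where
  "quad_form M x = x \<bullet> (M *v x)"

lemma quad_form_mat1 [simp]: "quad_form (mat 1) x = x \<bullet> x"
  unfolding quad_form_def by simp

lemma quad_form_diff_matrix: "quad_form (A - B) x = quad_form A x - quad_form B x"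
  unfolding quad_form_def by (simp add: matrix_vector_mult_diff_rdistrib inner_diff_right)

lemma quad_form_combination:
  "quad_form (u *\<^sub>R A + v *\<^sub>R B) x = u * quad_form A x + v * quad_form B x"
  unfolding quad_form_def
  by (simp add: matrix_vector_mult_add_rdistrib scaleR_matrix_vector_assoc[symmetric] inner_add_right)

lemma quad_form_add:
  "quad_form M (a + b) = quad_form M a + quad_form M b + a \<bullet> (M *v b) + b \<bullet> (M *v a)"
  unfolding quad_form_def by (simp add: matrix_vector_right_distrib inner_add_left inner_add_right)

lemma quad_form_diff:
  "quad_form M (a - b) = quad_form M a + quad_form M b - a \<bullet> (M *v b) - b \<bullet> (M *v a)"
  unfolding quad_form_def
  by (simp add: matrix_vector_mult_diff_distrib inner_diff_left inner_diff_right)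

lemma continuous_on_quad_form: "continuous_on S (\<lambda>M. quad_form M x)"
  unfolding quad_form_def inner_vec_def matrix_vector_mult_def by (intro continuous_intros)

lemma inner_axis_matrix_axis: "axis i 1 \<bullet> ((A::real^'n::finite^'n) *v axis j 1) = A$i$j"
  by (simp add: matrix_vector_mult_basis column_def inner_axis')

lemma symmetric_inner_mult:
  "transpose A = (A::real^'n::finite^'n) \<Longrightarrow> x \<bullet> (A *v y) = (A *v x) \<bullet> y"
  by (metis dot_lmul_matrix inner_commute transpose_matrix_vector)

lemma symmetric_if_inner_mult:
  assumes "\<And>x y. x \<bullet> ((A::real^'n::finite^'n) *v y) = (A *v x) \<bullet> y"
  shows "transpose A = A"
proof -
  have "A$j$i = A$i$j" for i j
    using assms[of "axis i 1" "axis j 1"] by (simp add: inner_axis_matrix_axis inner_commute)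
  then show ?thesis by (simp add: vec_eq_iff transpose_def)
qed

lemma quad_form_congruence:
  "transpose R = (R::real^'n::finite^'n) \<Longrightarrow> quad_form (R ** M ** R) x = quad_form M (R *v x)"
  unfolding quad_form_def by (simp add: symmetric_inner_mult matrix_vector_mul_assoc[symmetric])

lemma psd_congruence:
  assumes "psd D" "transpose Q = Q"
  shows "psd (Q ** D ** Q)"
  using assms quad_form_congruence[OF assms(2), of D]
  unfolding psd_def quad_form_def by (simp add: matrix_transpose_mul matrix_mul_assoc)

section \<open>Partitions and block-diagonal matrices\<close>

definition same_block :: "'n set set \<Rightarrow> 'n \<Rightarrow> 'n \<Rightarrow> bool" where
  "same_block P i j \<longleftrightarrow> (\<exists>I\<in>P. i \<in> I \<and> j \<in> I)"

definition block_diag :: "'n::finite set set \<Rightarrow> real^'n^'n \<Rightarrow> real^'n^'n" where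
  "block_diag P X = (\<chi> i j. if same_block P i j then X $ i $ j else 0)"

definition vec_restrict :: "'n::finite set \<Rightarrow> real^'n \<Rightarrow> real^'n" where
  "vec_restrict I x = (\<chi> i. if i \<in> I then x $ i else 0)"

lemma partition_block_unique:
  "is_partition P \<Longrightarrow> I \<in> P \<Longrightarrow> J \<in> P \<Longrightarrow> i \<in> I \<Longrightarrow> i \<in> J \<Longrightarrow> I = J"
  unfolding is_partition_def by (meson disjoint_iff)

lemma same_block_iff_mem:
  assumes P: "is_partition P" and I: "I \<in> P" "i \<in> I"
  shows "same_block P i j \<longleftrightarrow> j \<in> I"
proof
  assume "same_block P i j"
  then obtain J where J: "J \<in> P" "i \<in> J" "j \<in> J"
    unfolding same_block_def by blast
  then show "j \<in> I" using partition_block_unique[OF P I(1) J(1) I(2) J(2)] by simp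
qed (use I in \<open>auto simp: same_block_def\<close>)

lemma same_block_refl: "is_partition P \<Longrightarrow> same_block P i i"
  unfolding is_partition_def same_block_def by (metis UNIV_I UnionE)

lemma same_block_sym: "same_block P i j \<Longrightarrow> same_block P j i"
  unfolding same_block_def by blast

lemma same_block_trans:
  assumes P: "is_partition P" and "same_block P i j" "same_block P j k"
  shows "same_block P i k"
proof -
  obtain I where I: "I \<in> P" "i \<in> I" "j \<in> I"
    using assms(2) unfolding same_block_def by blast
  then have "k \<in> I" using same_block_iff_mem[OF P I(1) I(3)] assms(3) by simp
  then show ?thesis using I unfolding same_block_def by blast
qed

lemma sum_partition_indicator:
  assumes "is_partition (P :: 'n::finite set set)"
  shows "(\<Sum>I\<in>P. if i \<in> I \<and> j \<in> I then a else 0) = (if same_block P i j then a else (0::real))"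
proof (cases "same_block P i j")
  case True
  then obtain I0 where I0: "I0 \<in> P" "i \<in> I0" "j \<in> I0"
    unfolding same_block_def by blast
  have "(\<Sum>I\<in>P. if i \<in> I \<and> j \<in> I then a else 0) = (\<Sum>I\<in>P. if I = I0 then a else 0)"
    using partition_block_unique[OF assms _ I0(1)] I0 by (intro sum.cong) auto
  also have "\<dots> = a"
    using I0(1) by (simp add: sum.delta)
  finally show ?thesis using True by simp
next
  case False
  then have "\<forall>I\<in>P. (if i \<in> I \<and> j \<in> I then a else 0) = 0"
    unfolding same_block_def by auto
  then show ?thesis using False by (simp only: sum.neutral if_False)
qed

lemma block_diag_nth [simp]: "block_diag P X $ i $ j = (if same_block P i j then X $ i $ j else 0)"
  unfolding block_diag_def by simp

lemma vec_restrict_nth [simp]: "vec_restrict I x $ i = (if i \<in> I then x $ i else 0)"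
  unfolding vec_restrict_def by simp

lemma block_diag_idem [simp]: "block_diag P (block_diag P X) = block_diag P X"
  by (simp add: vec_eq_iff)

lemma block_diag_add: "block_diag P (X + Y) = block_diag P X + block_diag P Y"
  by (simp add: vec_eq_iff)

lemma block_diag_diff: "block_diag P (X - Y) = block_diag P X - block_diag P Y"
  by (simp add: vec_eq_iff)

lemma block_diag_scaleR: "block_diag P (c *\<^sub>R X) = c *\<^sub>R block_diag P X"
  by (simp add: vec_eq_iff)

lemma block_diag_mat1: "is_partition P \<Longrightarrow> block_diag P (mat 1) = mat 1"
  by (simp add: vec_eq_iff mat_def same_block_refl)

lemma transpose_block_diag: "transpose (block_diag P X) = block_diag P (transpose X)"
  by (auto simp: vec_eq_iff transpose_def intro: same_block_sym)

lemma block_diag_mult_right: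
  assumes P: "is_partition P" and D: "block_diag P D = D"
  shows "block_diag P (X ** D) = block_diag P X ** D"
proof -
  have entry: "(if same_block P i j then X$i$k * D$k$j else 0)
      = (if same_block P i k then X$i$k else 0) * D$k$j" for i j k
  proof (cases "same_block P k j")
    case True
    then have "same_block P i j \<longleftrightarrow> same_block P i k"
      using same_block_trans[OF P] same_block_sym by metis
    then show ?thesis by simp
  next
    case False
    then have "D$k$j = 0" by (metis D block_diag_nth)
    then show ?thesis by simp
  qed
  have "block_diag P (X ** D) $ i $ j = (block_diag P X ** D) $ i $ j" for i j
    by (cases "same_block P i j") (simp_all add: matrix_matrix_mult_def entry[symmetric])
  then show ?thesis by (simp add: vec_eq_iff)
qed

lemma block_diag_mult_left:
  assumes P: "is_partition P" and D: "block_diag P D = D"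
  shows "block_diag P (D ** X) = D ** block_diag P X"
proof -
  have "block_diag P (transpose D) = transpose D"
    using D by (metis transpose_block_diag)
  then have "transpose (block_diag P (D ** X)) = transpose (D ** block_diag P X)"
    using block_diag_mult_right[OF P, of "transpose D" "transpose X"]
    by (simp add: transpose_block_diag matrix_transpose_mul)
  then show ?thesis by simp
qed

lemma continuous_on_block_diag:
  fixes P :: "'n::finite set set"
  shows "continuous_on S (block_diag P)"
proof -
  have "continuous_on S (\<lambda>X::real^'n::finite^'n. if same_block P i j then X$i$j else 0)" for i j
    by (cases "same_block P i j") (auto intro!: continuous_intros)
  then show ?thesis
    unfolding block_diag_def by (intro continuous_on_vec_lambda)
qed

lemma elliptope_P_if_block_diag_eq_mat1:
  assumes "is_partition P" "psd Y" "block_diag P Y = mat 1"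
  shows "Y \<in> elliptope_P P"
proof -
  have "Y $ i $ j = (if i = j then 1 else 0)" if "I \<in> P" "i \<in> I" "j \<in> I" for I i j
  proof -
    have "same_block P i j"
      using that unfolding same_block_def by blast
    then have "Y $ i $ j = block_diag P Y $ i $ j" by simp
    then show ?thesis using assms(3) by (simp add: mat_def)
  qed
  then show ?thesis
    unfolding elliptope_P_def using assms(2) by blast
qed

lemma vec_restrict_idem [simp]: "vec_restrict I (vec_restrict I x) = vec_restrict I x"
  by (simp add: vec_eq_iff)

lemma vec_restrict_diff_self [simp]: "vec_restrict I (x - vec_restrict I x) = 0"
  by (simp add: vec_eq_iff)

lemma inner_vec_restrict: "vec_restrict I x \<bullet> y = vec_restrict I x \<bullet> vec_restrict I y"
  by (auto simp: inner_vec_def intro!: sum.cong)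

lemma inner_self_vec_restrict_split:
  "x \<bullet> x = vec_restrict I x \<bullet> vec_restrict I x + (x - vec_restrict I x) \<bullet> (x - vec_restrict I x)"
proof -
  have "vec_restrict I x \<bullet> (x - vec_restrict I x) = 0"
    by (subst inner_vec_restrict) simp
  then show ?thesis
    by (simp add: inner_diff_left inner_diff_right inner_commute)
qed

lemma quad_form_block_diag:
  assumes "is_partition P"
  shows "quad_form (block_diag P M) x = (\<Sum>I\<in>P. quad_form M (vec_restrict I x))"
proof -
  have "(\<Sum>I\<in>P. quad_form M (vec_restrict I x))
      = (\<Sum>I\<in>P. \<Sum>i\<in>UNIV. \<Sum>j\<in>UNIV. if i \<in> I \<and> j \<in> I then x$i * M$i$j * x$j else 0)"
    unfolding quad_form_def inner_vec_def matrix_vector_mult_def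
    by (auto simp: sum_distrib_left intro!: sum.cong)
  also have "\<dots> = (\<Sum>i\<in>UNIV. \<Sum>j\<in>UNIV. \<Sum>I\<in>P. if i \<in> I \<and> j \<in> I then x$i * M$i$j * x$j else 0)"
    by (subst sum.swap, subst (2) sum.swap, rule refl)
  also have "\<dots> = (\<Sum>i\<in>UNIV. \<Sum>j\<in>UNIV. if same_block P i j then x$i * M$i$j * x$j else 0)"
    using sum_partition_indicator[OF assms] by simp
  also have "\<dots> = quad_form (block_diag P M) x"
    unfolding quad_form_def inner_vec_def matrix_vector_mult_def
    by (auto simp: sum_distrib_left intro!: sum.cong)
  finally show ?thesis by simp
qed

lemma sum_inner_vec_restrict:
  "is_partition P \<Longrightarrow> (\<Sum>I\<in>P. vec_restrict I x \<bullet> vec_restrict I x) = x \<bullet> x"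
  using quad_form_block_diag[of P "mat 1" x] by (simp add: block_diag_mat1)

lemma inner_block_diag_disjoint:
  assumes P: "is_partition P" and D: "block_diag P D = D" and I: "I \<in> P"
    and a: "vec_restrict I a = a" and w: "vec_restrict I w = 0"
  shows "a \<bullet> (D *v w) = 0"
proof -
  have prod_zero: "a$i * (D$i$j * w$j) = 0" for i j
  proof (cases "i \<in> I \<and> same_block P i j")
    case True
    then have "j \<in> I" using same_block_iff_mem[OF P I] by blast
    then have "w$j = 0" using w by (metis vec_restrict_nth zero_index)
    then show ?thesis by simp
  next
    case False
    then have "a$i = 0 \<or> D$i$j = 0" using a D by (metis block_diag_nth vec_restrict_nth)
    then show ?thesis by auto
  qed
  show ?thesis
    unfolding inner_vec_def matrix_vector_mult_def by (simp add: sum_distrib_left prod_zero)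
qed

lemma quad_form_block_diag_split:
  assumes P: "is_partition P" and D: "block_diag P D = D" "transpose D = D" and I: "I \<in> P"
  shows "quad_form D x = quad_form D (vec_restrict I x) + quad_form D (x - vec_restrict I x)"
proof -
  let ?a = "vec_restrict I x" and ?w = "x - vec_restrict I x"
  have cross: "?a \<bullet> (D *v ?w) = 0"
    by (rule inner_block_diag_disjoint[OF P D(1) I]) simp_all
  then have cross': "?w \<bullet> (D *v ?a) = 0"
    using symmetric_inner_mult[OF D(2), of ?w ?a] by (simp add: inner_commute)
  have "quad_form D x = quad_form D (?a + ?w)"
    by simp
  also have "\<dots> = quad_form D ?a + quad_form D ?w"
    by (simp only: quad_form_add cross cross' add_0_right)
  finally show ?thesis .
qed

section \<open>Bounded positive semidefinite block-diagonal matrices\<close>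

definition bounded_block_psd :: "'n::finite set set \<Rightarrow> real \<Rightarrow> (real^'n^'n) set" where
  "bounded_block_psd P c = {D. block_diag P D = D \<and> transpose D = D
     \<and> (\<forall>x. 0 \<le> quad_form D x) \<and> (\<forall>x. quad_form D x \<le> c * (x \<bullet> x))}"

lemma bounded_block_psd_entry_bound:
  assumes "D \<in> bounded_block_psd P c"
  shows "\<bar>D$i$j\<bar> \<le> c"
proof -
  have D: "transpose D = D" "\<And>x. 0 \<le> quad_form D x" "\<And>x. quad_form D x \<le> c * (x \<bullet> x)"
    using assms unfolding bounded_block_psd_def by auto
  have diag: "quad_form D (axis k 1) = D$k$k" for k
    by (simp add: quad_form_def inner_axis_matrix_axis)
  have sym: "D$j$i = D$i$j"
    using arg_cong[OF D(1), of "\<lambda>A. A $ i $ j"] by (simp add: transpose_def)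
  have ii: "0 \<le> D$i$i" "D$i$i \<le> c" "0 \<le> D$j$j" "D$j$j \<le> c"
    using D(2)[of "axis i 1"] D(3)[of "axis i 1"] D(2)[of "axis j 1"] D(3)[of "axis j 1"]
    by (simp_all add: diag inner_axis_axis)
  show ?thesis
  proof (cases "i = j")
    case True
    then show ?thesis using ii by simp
  next
    case False
    \<comment> \<open>positivity on \<open>e\<^sub>i \<plusminus> e\<^sub>j\<close> gives \<open>2\<bar>D\<^sub>i\<^sub>j\<bar> \<le> D\<^sub>i\<^sub>i + D\<^sub>j\<^sub>j\<close>\<close>
    have "quad_form D (axis i 1 + axis j 1) = D$i$i + D$j$j + 2 * D$i$j"
      by (simp add: quad_form_add diag inner_axis_matrix_axis sym)
    moreover have "quad_form D (axis i 1 - axis j 1) = D$i$i + D$j$j - 2 * D$i$j"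
      by (simp add: quad_form_diff diag inner_axis_matrix_axis sym)
    ultimately show ?thesis
      using D(2)[of "axis i 1 + axis j 1"] D(2)[of "axis i 1 - axis j 1"] ii by linarith
  qed
qed

lemma bounded_bounded_block_psd:
  fixes P :: "'n::finite set set"
  shows "bounded (bounded_block_psd P c)"
proof -
  have "norm D \<le> (\<Sum>i\<in>(UNIV::'n set). \<Sum>j\<in>(UNIV::'n set). c)" if "D \<in> bounded_block_psd P c" for D
  proof -
    have "norm D \<le> (\<Sum>i\<in>UNIV. norm (D$i))"
      unfolding norm_vec_def by (rule L2_set_le_sum) simp
    also have "\<dots> \<le> (\<Sum>i\<in>UNIV. \<Sum>j\<in>UNIV. \<bar>D$i$j\<bar>)"
      by (rule sum_mono) (rule norm_le_l1_cart)
    also have "\<dots> \<le> (\<Sum>i\<in>(UNIV::'n set). \<Sum>j\<in>(UNIV::'n set). c)"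
      by (intro sum_mono) (rule bounded_block_psd_entry_bound[OF that])
    finally show ?thesis .
  qed
  then show ?thesis unfolding bounded_iff by blast
qed

lemma closed_bounded_block_psd: "closed (bounded_block_psd P c)"
proof -
  have "bounded_block_psd P c = {D. block_diag P D = D} \<inter> {D. transpose D = D}
      \<inter> (\<Inter>x. {D. 0 \<le> quad_form D x}) \<inter> (\<Inter>x. {D. quad_form D x \<le> c * (x \<bullet> x)})"
    unfolding bounded_block_psd_def by auto
  then show ?thesis
    by (simp only:) (intro closed_Int closed_INT ballI closed_Collect_eq closed_Collect_le
        continuous_on_block_diag continuous_on_transpose continuous_on_quad_form
        continuous_on_id continuous_on_const)
qed

lemma compact_bounded_block_psd: "compact (bounded_block_psd P c)"
  by (simp add: compact_eq_bounded_closed bounded_bounded_block_psd closed_bounded_block_psd)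

lemma convex_bounded_block_psd:
  fixes P :: "'n::finite set set"
  shows "convex (bounded_block_psd P c)"
  unfolding convex_def
proof (intro ballI allI impI)
  fix D1 D2 :: "real^'n^'n" and u v :: real
  assume "D1 \<in> bounded_block_psd P c" "D2 \<in> bounded_block_psd P c" and uv: "0 \<le> u" "0 \<le> v" "u + v = 1"
  then have D1: "block_diag P D1 = D1" "transpose D1 = D1"
      "\<And>x. 0 \<le> quad_form D1 x" "\<And>x. quad_form D1 x \<le> c * (x \<bullet> x)"
    and D2: "block_diag P D2 = D2" "transpose D2 = D2"
      "\<And>x. 0 \<le> quad_form D2 x" "\<And>x. quad_form D2 x \<le> c * (x \<bullet> x)"
    unfolding bounded_block_psd_def by auto
  have "0 \<le> u * quad_form D1 x + v * quad_form D2 x" for x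
    using uv D1(3) D2(3) by simp
  moreover have "u * quad_form D1 x + v * quad_form D2 x \<le> c * (x \<bullet> x)" for x
  proof -
    have "u * quad_form D1 x + v * quad_form D2 x \<le> u * (c * (x \<bullet> x)) + v * (c * (x \<bullet> x))"
      using uv D1(4) D2(4) by (intro add_mono mult_left_mono) auto
    also have "\<dots> = c * (x \<bullet> x)"
      using uv(3) by (simp add: distrib_right[symmetric])
    finally show ?thesis .
  qed
  ultimately show "u *\<^sub>R D1 + v *\<^sub>R D2 \<in> bounded_block_psd P c"
    unfolding bounded_block_psd_def
    using D1 D2 by (simp add: block_diag_add block_diag_scaleR transpose_add transpose_scalar quad_form_combination)
qed

lemma zero_in_bounded_block_psd: "0 \<le> c \<Longrightarrow> 0 \<in> bounded_block_psd P c"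
  unfolding bounded_block_psd_def by (simp add: quad_form_def transpose_def vec_eq_iff)

section \<open>Orthogonal projection\<close>

lemma orth_proj_unique:
  assumes "subspace U" "p \<in> U" "\<forall>u\<in>U. (x - p) \<bullet> u = 0"
  shows "orth_proj U x = p"
  unfolding orth_proj_def
proof (rule the_equality)
  show "p \<in> U \<and> (\<forall>u\<in>U. (x - p) \<bullet> u = 0)" using assms by simp
next
  fix q assume q: "q \<in> U \<and> (\<forall>u\<in>U. (x - q) \<bullet> u = 0)"
  then have "q - p \<in> U" using assms subspace_diff by blast
  then have "(q - p) \<bullet> (q - p) = (x - p) \<bullet> (q - p) - (x - q) \<bullet> (q - p)"
    by (simp add: inner_diff_left)
  also have "\<dots> = 0" using q assms(3) \<open>q - p \<in> U\<close> by simp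
  finally show "q = p" by simp
qed

lemma orth_proj_in_orthogonal:
  assumes "subspace U"
  shows "orth_proj U x \<in> U \<and> (\<forall>u\<in>U. (x - orth_proj U x) \<bullet> u = 0)"
proof -
  obtain y z where yz: "y \<in> span U" "\<And>w. w \<in> span U \<Longrightarrow> orthogonal z w" "x = y + z"
    using orthogonal_subspace_decomp_exists[of U x] by blast
  have span: "span U = U" using assms by (simp add: span_eq_iff)
  have "orth_proj U x = y"
    by (rule orth_proj_unique[OF assms]) (use yz span in \<open>auto simp: orthogonal_def\<close>)
  then show ?thesis using yz span by (auto simp: orthogonal_def)
qed

lemma orth_proj_in: "subspace U \<Longrightarrow> orth_proj U x \<in> U"
  using orth_proj_in_orthogonal by blast

lemma orth_proj_orthogonal: "subspace U \<Longrightarrow> u \<in> U \<Longrightarrow> (x - orth_proj U x) \<bullet> u = 0"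
  using orth_proj_in_orthogonal by blast

lemma orth_proj_id: "subspace U \<Longrightarrow> u \<in> U \<Longrightarrow> orth_proj U u = u"
  by (rule orth_proj_unique) auto

lemma linear_orth_proj:
  assumes U: "subspace U"
  shows "linear (orth_proj U)"
proof (rule linearI)
  fix x y
  show "orth_proj U (x + y) = orth_proj U x + orth_proj U y"
  proof (rule orth_proj_unique[OF U])
    show "orth_proj U x + orth_proj U y \<in> U"
      using U orth_proj_in subspace_add by blast
    show "\<forall>u\<in>U. (x + y - (orth_proj U x + orth_proj U y)) \<bullet> u = 0"
    proof
      fix u assume "u \<in> U"
      then have "(x - orth_proj U x) \<bullet> u = 0" "(y - orth_proj U y) \<bullet> u = 0"
        using orth_proj_orthogonal[OF U] by auto
      then show "(x + y - (orth_proj U x + orth_proj U y)) \<bullet> u = 0"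
        by (simp add: algebra_simps inner_diff_left inner_add_left)
    qed
  qed
next
  fix c :: real and x
  show "orth_proj U (c *\<^sub>R x) = c *\<^sub>R orth_proj U x"
  proof (rule orth_proj_unique[OF U])
    show "c *\<^sub>R orth_proj U x \<in> U"
      using U orth_proj_in subspace_scale by blast
    show "\<forall>u\<in>U. (c *\<^sub>R x - c *\<^sub>R orth_proj U x) \<bullet> u = 0"
      using orth_proj_orthogonal[OF U, of _ x] by (simp add: scaleR_diff_right[symmetric])
  qed
qed

lemma inner_orth_proj_orth_proj:
  "subspace U \<Longrightarrow> x \<bullet> orth_proj U y = orth_proj U x \<bullet> orth_proj U y"
proof -
  assume U: "subspace U"
  have "(x - orth_proj U x) \<bullet> orth_proj U y = 0"
    by (rule orth_proj_orthogonal[OF U orth_proj_in[OF U]])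
  then show ?thesis by (simp add: inner_diff_left)
qed

lemma inner_orth_proj_sym: "subspace U \<Longrightarrow> x \<bullet> orth_proj U y = orth_proj U x \<bullet> y"
  using inner_orth_proj_orth_proj[of U x y] inner_orth_proj_orth_proj[of U y x]
  by (simp add: inner_commute)

lemma norm_orth_proj_sq: "subspace U \<Longrightarrow> (norm (orth_proj U x))\<^sup>2 = x \<bullet> orth_proj U x"
  using inner_orth_proj_orth_proj[of U x x] by (simp add: power2_norm_eq_inner)

lemma norm_orth_proj_le:
  assumes U: "subspace U"
  shows "norm (orth_proj U x) \<le> norm x"
proof -
  have "norm (orth_proj U x) * norm (orth_proj U x) \<le> norm x * norm (orth_proj U x)"
    using norm_orth_proj_sq[OF U, of x] Cauchy_Schwarz_ineq2[of x "orth_proj U x"]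
    by (simp add: power2_eq_square)
  then show ?thesis
    by (cases "orth_proj U x = 0") auto
qed

lemma norm_off_block_orth_proj_le:
  assumes U: "subspace U" and y: "vec_restrict I y = y"
  shows "4 * ((orth_proj U y - vec_restrict I (orth_proj U y)) \<bullet> (orth_proj U y - vec_restrict I (orth_proj U y)))
    \<le> y \<bullet> y"
proof -
  let ?z = "orth_proj U y" and ?a = "vec_restrict I (orth_proj U y)"
  have "?z \<bullet> ?z = y \<bullet> ?z"
    using norm_orth_proj_sq[OF U, of y] by (simp add: power2_norm_eq_inner)
  also have "\<dots> = y \<bullet> ?a"
    using inner_vec_restrict[of I y ?z] y by simp
  finally have zz: "?z \<bullet> ?z = y \<bullet> ?a" .
  have "(?z - ?a) \<bullet> (?z - ?a) = ?z \<bullet> ?z - ?a \<bullet> ?a"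
    using inner_self_vec_restrict_split[of ?z I] by simp
  moreover have "0 \<le> (y - 2 *\<^sub>R ?a) \<bullet> (y - 2 *\<^sub>R ?a)"
    by simp
  then have "0 \<le> y \<bullet> y - 4 * (y \<bullet> ?a) + 4 * (?a \<bullet> ?a)"
    by (simp add: inner_diff_left inner_diff_right inner_commute algebra_simps)
  ultimately show ?thesis using zz by simp
qed

section \<open>The projector and its block-diagonal part\<close>

locale partition_subspace =
  fixes P :: "'n::finite set set" and U :: "(real^'n) set"
  assumes partition: "is_partition P" and subspace: "subspace U"
begin

abbreviation proj_mat :: "real^'n^'n" where
  "proj_mat \<equiv> matrix (orth_proj U)"

abbreviation block_proj :: "real^'n^'n" where
  "block_proj \<equiv> block_diag P proj_mat"

abbreviation block_compl :: "real^'n^'n" where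
  "block_compl \<equiv> block_diag P (mat 1 - proj_mat)"

lemma proj_mat_mult: "proj_mat *v x = orth_proj U x"
  using matrix_vector_mul(2)[OF linear_orth_proj[OF subspace]] by metis

lemma symmetric_proj_mat: "transpose proj_mat = proj_mat"
  by (rule symmetric_if_inner_mult) (simp add: proj_mat_mult inner_orth_proj_sym[OF subspace])

lemma symmetric_block_proj: "transpose block_proj = block_proj"
  by (simp add: transpose_block_diag symmetric_proj_mat)

lemma block_compl_eq: "block_compl = mat 1 - block_proj"
  by (simp add: block_diag_diff block_diag_mat1[OF partition])

lemma symmetric_block_compl: "transpose block_compl = block_compl"
  by (simp add: block_compl_eq transpose_diff symmetric_block_proj)

lemma quad_form_proj_mat: "quad_form proj_mat x = (norm (orth_proj U x))\<^sup>2"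
  by (simp add: quad_form_def proj_mat_mult norm_orth_proj_sq[OF subspace])

lemma norm_orth_proj_vec_restrict_le:
  assumes I: "I \<in> P"
  shows "(norm (orth_proj U (vec_restrict I x)))\<^sup>2 \<le> coherence P U * (vec_restrict I x \<bullet> vec_restrict I x)"
proof (cases "vec_restrict I x = 0")
  case True
  then show ?thesis
    using linear_0[OF linear_orth_proj[OF subspace]] by simp
next
  case False
  let ?y = "vec_restrict I x" and ?S = "\<Union>I\<in>P. sphere_supp I"
  define z where "z = (1 / norm ?y) *\<^sub>R ?y"
  have ny: "norm ?y > 0" using False by simp
  have "z \<in> sphere_supp I"
    unfolding sphere_supp_def z_def using ny by auto
  then have "z \<in> ?S" using I by blast
  moreover have "bdd_above ((\<lambda>x. (norm (orth_proj U x))\<^sup>2) ` ?S)"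
  proof (rule bdd_aboveI2)
    fix w assume "w \<in> ?S"
    then have "norm w = 1" unfolding sphere_supp_def by auto
    then show "(norm (orth_proj U w))\<^sup>2 \<le> 1"
      using norm_orth_proj_le[OF subspace, of w] by (simp add: power_le_one)
  qed
  ultimately have "(norm (orth_proj U z))\<^sup>2 \<le> coherence P U"
    unfolding coherence_def by (rule cSUP_upper)
  moreover have "orth_proj U z = (1 / norm ?y) *\<^sub>R orth_proj U ?y"
    unfolding z_def using linear_scale[OF linear_orth_proj[OF subspace]] by simp
  ultimately have "(norm (orth_proj U ?y))\<^sup>2 / (norm ?y)\<^sup>2 \<le> coherence P U"
    by (simp add: power_divide)
  then show ?thesis
    using ny by (simp add: divide_le_eq power2_norm_eq_inner)
qed

lemma quad_form_block_proj_le: "quad_form block_proj x \<le> coherence P U * (x \<bullet> x)"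
proof -
  have "quad_form block_proj x = (\<Sum>I\<in>P. (norm (orth_proj U (vec_restrict I x)))\<^sup>2)"
    by (simp add: quad_form_block_diag[OF partition] quad_form_proj_mat)
  also have "\<dots> \<le> (\<Sum>I\<in>P. coherence P U * (vec_restrict I x \<bullet> vec_restrict I x))"
    by (intro sum_mono norm_orth_proj_vec_restrict_le)
  also have "\<dots> = coherence P U * (x \<bullet> x)"
    by (simp only: sum_distrib_left[symmetric] sum_inner_vec_restrict[OF partition])
  finally show ?thesis .
qed

definition defect :: "real^'n^'n \<Rightarrow> real^'n^'n" where
  "defect D = block_diag P (proj_mat ** D ** proj_mat) - block_proj ** D ** block_proj"

lemma vec_restrict_block_proj_mult:
  assumes I: "I \<in> P"
  shows "vec_restrict I (block_proj *v x) = vec_restrict I (orth_proj U (vec_restrict I x))"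
proof -
  have "(block_proj *v x)$i = (proj_mat *v vec_restrict I x)$i" if "i \<in> I" for i
    using same_block_iff_mem[OF partition I that]
    by (auto simp: matrix_vector_mult_def intro!: sum.cong)
  then show ?thesis by (simp add: vec_eq_iff proj_mat_mult)
qed

lemma quad_form_defect:
  assumes D: "block_diag P D = D" "transpose D = D"
  shows "quad_form (defect D) x
    = (\<Sum>I\<in>P. quad_form D (orth_proj U (vec_restrict I x) - vec_restrict I (orth_proj U (vec_restrict I x))))"
proof -
  have full: "quad_form (block_diag P (proj_mat ** D ** proj_mat)) x
      = (\<Sum>I\<in>P. quad_form D (orth_proj U (vec_restrict I x)))"
    by (simp add: quad_form_block_diag[OF partition] quad_form_congruence[OF symmetric_proj_mat] proj_mat_mult)
  have "quad_form (block_proj ** D ** block_proj) x = quad_form (block_diag P D) (block_proj *v x)"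
    by (simp add: quad_form_congruence[OF symmetric_block_proj] D(1))
  also have "\<dots> = (\<Sum>I\<in>P. quad_form D (vec_restrict I (orth_proj U (vec_restrict I x))))"
    by (simp add: quad_form_block_diag[OF partition] vec_restrict_block_proj_mult)
  finally have blocks: "quad_form (block_proj ** D ** block_proj) x
      = (\<Sum>I\<in>P. quad_form D (vec_restrict I (orth_proj U (vec_restrict I x))))" .
  have "quad_form (defect D) x = (\<Sum>I\<in>P. quad_form D (orth_proj U (vec_restrict I x))
      - quad_form D (vec_restrict I (orth_proj U (vec_restrict I x))))"
    by (simp add: defect_def quad_form_diff_matrix full blocks sum_subtractf)
  also have "\<dots> = (\<Sum>I\<in>P. quad_form D (orth_proj U (vec_restrict I x)
      - vec_restrict I (orth_proj U (vec_restrict I x))))"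
  proof (rule sum.cong[OF refl])
    fix I assume "I \<in> P"
    show "quad_form D (orth_proj U (vec_restrict I x)) - quad_form D (vec_restrict I (orth_proj U (vec_restrict I x)))
        = quad_form D (orth_proj U (vec_restrict I x) - vec_restrict I (orth_proj U (vec_restrict I x)))"
      using quad_form_block_diag_split[OF partition D \<open>I \<in> P\<close>, of "orth_proj U (vec_restrict I x)"]
      by linarith
  qed
  finally show ?thesis .
qed

lemma quad_form_defect_bounds:
  assumes "D \<in> bounded_block_psd P c"
  shows "0 \<le> quad_form (defect D) x" "quad_form (defect D) x \<le> c / 4 * (x \<bullet> x)"
proof -
  have D: "block_diag P D = D" "transpose D = D"
    "\<And>x. 0 \<le> quad_form D x" "\<And>x. quad_form D x \<le> c * (x \<bullet> x)"
    using assms unfolding bounded_block_psd_def by auto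
  have "0 \<le> c"
    using bounded_block_psd_entry_bound[OF assms, of undefined undefined] by linarith
  show "0 \<le> quad_form (defect D) x"
    unfolding quad_form_defect[OF D(1,2)] by (intro sum_nonneg D(3))
  have "quad_form (defect D) x \<le> (\<Sum>I\<in>P. c / 4 * (vec_restrict I x \<bullet> vec_restrict I x))"
    unfolding quad_form_defect[OF D(1,2)]
  proof (rule sum_mono)
    fix I
    let ?y = "vec_restrict I x"
    let ?w = "orth_proj U ?y - vec_restrict I (orth_proj U ?y)"
    have "quad_form D ?w \<le> c * (?w \<bullet> ?w)"
      by (rule D(4))
    also have "\<dots> \<le> c / 4 * (?y \<bullet> ?y)"
      using mult_left_mono[OF norm_off_block_orth_proj_le[OF subspace, of I ?y] \<open>0 \<le> c\<close>]
      by (simp add: field_simps)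
    finally show "quad_form D ?w \<le> c / 4 * (?y \<bullet> ?y)" .
  qed
  also have "\<dots> = c / 4 * (x \<bullet> x)"
    by (simp only: sum_distrib_left[symmetric] sum_inner_vec_restrict[OF partition])
  finally show "quad_form (defect D) x \<le> c / 4 * (x \<bullet> x)" .
qed

lemma block_diag_defect: "block_diag P D = D \<Longrightarrow> block_diag P (defect D) = defect D"
  using block_diag_mult_right[OF partition, of block_proj "block_proj ** D"]
    block_diag_mult_left[OF partition, of block_proj D]
  by (simp add: defect_def block_diag_diff)

lemma symmetric_defect: "transpose D = D \<Longrightarrow> transpose (defect D) = defect D"
  by (simp add: defect_def transpose_diff transpose_block_diag matrix_transpose_mul
      symmetric_proj_mat symmetric_block_proj matrix_mul_assoc)

lemma block_diag_compl_congruence: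
  assumes D: "block_diag P D = D"
  shows "block_diag P ((mat 1 - proj_mat) ** D ** (mat 1 - proj_mat))
    = block_compl ** D ** block_compl + defect D"
proof -
  have "block_diag P ((mat 1 - proj_mat) ** D ** (mat 1 - proj_mat))
      = D - block_proj ** D - D ** block_proj + block_diag P (proj_mat ** D ** proj_mat)"
    by (simp add: compl_congruence_expand block_diag_add block_diag_diff D
        block_diag_mult_right[OF partition D] block_diag_mult_left[OF partition D])
  also have "\<dots> = block_compl ** D ** block_compl + defect D"
    by (simp add: block_compl_eq compl_congruence_expand defect_def)
  finally show ?thesis .
qed

end

section \<open>The fixed-point argument\<close>

locale small_coherence = partition_subspace +
  assumes coherence_less_half: "coherence P U < 1/2"
begin

lemma norm_le_twice_block_compl_mult: "norm x \<le> 2 * norm (block_compl *v x)"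
proof -
  have "coherence P U * (x \<bullet> x) \<le> 1/2 * (x \<bullet> x)"
    using coherence_less_half by (intro mult_right_mono) auto
  then have "1/2 * (x \<bullet> x) \<le> quad_form block_compl x"
    using quad_form_block_proj_le[of x] by (simp add: block_compl_eq quad_form_diff_matrix)
  also have "\<dots> \<le> norm x * norm (block_compl *v x)"
    unfolding quad_form_def by (rule norm_cauchy_schwarz)
  finally have "norm x * norm x \<le> norm x * (2 * norm (block_compl *v x))"
    by (simp add: power2_norm_eq_inner[symmetric] power2_eq_square)
  then show ?thesis
    by (cases "x = 0") auto
qed

lemma invertible_block_compl: "invertible block_compl"
proof -
  have "inj ((*v) block_compl)"
  proof (rule injI)
    fix x y assume "block_compl *v x = block_compl *v y"
    then have "block_compl *v (x - y) = 0" by (simp add: matrix_vector_mult_diff_distrib)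
    then show "x = y" using norm_le_twice_block_compl_mult[of "x - y"] by simp
  qed
  then show ?thesis
    using matrix_left_invertible_injective invertible_left_inverse by blast
qed

definition block_compl_inv where
  "block_compl_inv = matrix_inv block_compl"

lemma block_compl_inv_left: "block_compl_inv ** block_compl = mat 1"
  and block_compl_inv_right: "block_compl ** block_compl_inv = mat 1"
  using someI_ex[OF invertible_block_compl[unfolded invertible_def]]
  unfolding block_compl_inv_def matrix_inv_def by auto

lemma symmetric_block_compl_inv: "transpose block_compl_inv = block_compl_inv"
proof -
  have "transpose block_compl_inv ** block_compl = mat 1"
    using arg_cong[OF block_compl_inv_right, of transpose]
    by (simp add: matrix_transpose_mul symmetric_block_compl)
  then have "transpose block_compl_inv = transpose block_compl_inv ** (block_compl ** block_compl_inv)"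
    by (simp add: block_compl_inv_right)
  also have "\<dots> = block_compl_inv"
    by (simp add: matrix_mul_assoc \<open>transpose block_compl_inv ** block_compl = mat 1\<close>)
  finally show ?thesis .
qed

lemma block_diag_block_compl_inv: "block_diag P block_compl_inv = block_compl_inv"
proof -
  have "block_compl ** block_diag P block_compl_inv = mat 1"
    using block_diag_mult_left[OF partition block_diag_idem, of "mat 1 - proj_mat" block_compl_inv]
    by (simp add: block_compl_inv_right block_diag_mat1[OF partition])
  then have "block_compl_inv = block_compl_inv ** (block_compl ** block_diag P block_compl_inv)"
    by simp
  also have "\<dots> = block_diag P block_compl_inv"
    by (simp add: matrix_mul_assoc block_compl_inv_left)
  finally show ?thesis by simp
qed

lemma norm_block_compl_inv_mult_le: "norm (block_compl_inv *v x) \<le> 2 * norm x"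
  using norm_le_twice_block_compl_mult[of "block_compl_inv *v x"]
  by (simp add: matrix_vector_mul_assoc block_compl_inv_right)

definition fixpoint_map where
  "fixpoint_map D = block_compl_inv ** (mat 1 - defect D) ** block_compl_inv"

lemma fixpoint_map_in:
  assumes "D \<in> bounded_block_psd P 4"
  shows "fixpoint_map D \<in> bounded_block_psd P 4"
proof -
  have D: "block_diag P D = D" "transpose D = D"
    using assms unfolding bounded_block_psd_def by auto
  let ?R = block_compl_inv and ?M = "mat 1 - defect D"
  have M: "block_diag P ?M = ?M"
    using block_diag_defect[OF D(1)] by (simp add: block_diag_diff block_diag_mat1[OF partition])
  have "block_diag P (fixpoint_map D) = fixpoint_map D"
    using block_diag_mult_right[OF partition block_diag_block_compl_inv, of "?R ** ?M"]
      block_diag_mult_left[OF partition block_diag_block_compl_inv, of ?M] M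
    by (simp add: fixpoint_map_def)
  moreover have "transpose (fixpoint_map D) = fixpoint_map D"
    using symmetric_defect[OF D(2)]
    by (simp add: fixpoint_map_def matrix_transpose_mul symmetric_block_compl_inv transpose_diff
        matrix_mul_assoc)
  moreover have "0 \<le> quad_form (fixpoint_map D) x \<and> quad_form (fixpoint_map D) x \<le> 4 * (x \<bullet> x)" for x
  proof -
    let ?y = "?R *v x"
    have q: "quad_form (fixpoint_map D) x = ?y \<bullet> ?y - quad_form (defect D) ?y"
      by (simp add: fixpoint_map_def quad_form_congruence[OF symmetric_block_compl_inv] quad_form_diff_matrix)
    have "?y \<bullet> ?y = (norm ?y)\<^sup>2"
      by (simp add: power2_norm_eq_inner)
    also have "\<dots> \<le> (2 * norm x)\<^sup>2"
      using norm_block_compl_inv_mult_le[of x] by (intro power_mono) auto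
    also have "\<dots> = 4 * (x \<bullet> x)"
      by (simp add: power2_eq_square power2_norm_eq_inner[symmetric])
    finally show ?thesis
      using q quad_form_defect_bounds[OF assms, of ?y] by linarith
  qed
  ultimately show ?thesis
    unfolding bounded_block_psd_def by blast
qed

lemma continuous_on_fixpoint_map: "continuous_on S fixpoint_map"
proof -
  have "continuous_on S (\<lambda>D. proj_mat ** D ** proj_mat)"
    unfolding matrix_matrix_mult_def by (intro continuous_intros)
  then have "continuous_on S (\<lambda>D. block_diag P (proj_mat ** D ** proj_mat))"
    by (rule continuous_on_compose2[OF continuous_on_block_diag _ subset_UNIV])
  then show ?thesis
    unfolding fixpoint_map_def defect_def matrix_matrix_mult_def
    by (intro continuous_intros)
qed

lemma exists_fixpoint:
  obtains D where "D \<in> bounded_block_psd P 4" "fixpoint_map D = D"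
proof (rule brouwer[OF compact_bounded_block_psd convex_bounded_block_psd _ continuous_on_fixpoint_map])
  show "bounded_block_psd P 4 \<noteq> {}"
    using zero_in_bounded_block_psd[of 4 P] by auto
  show "fixpoint_map \<in> bounded_block_psd P 4 \<rightarrow> bounded_block_psd P 4"
    using fixpoint_map_in by blast
qed

lemma block_diag_compl_congruence_fixpoint:
  assumes "block_diag P D = D" "fixpoint_map D = D"
  shows "block_diag P ((mat 1 - proj_mat) ** D ** (mat 1 - proj_mat)) = mat 1"
proof -
  have "block_compl ** D ** block_compl = block_compl ** fixpoint_map D ** block_compl"
    using assms(2) by simp
  also have "\<dots> = (block_compl ** block_compl_inv) ** (mat 1 - defect D) ** (block_compl_inv ** block_compl)"
    by (simp add: fixpoint_map_def matrix_mul_assoc)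
  also have "\<dots> = mat 1 - defect D"
    by (simp add: block_compl_inv_left block_compl_inv_right)
  finally show ?thesis
    by (simp add: block_diag_compl_congruence[OF assms(1)])
qed

lemma realizable_if_fixpoint:
  assumes "D \<in> bounded_block_psd P 4" "fixpoint_map D = D"
  shows "realizable P U"
proof -
  let ?Q = "mat 1 - proj_mat"
  have D: "block_diag P D = D" "psd D"
    using assms(1) unfolding bounded_block_psd_def psd_def quad_form_def by auto
  have Q: "transpose ?Q = ?Q"
    by (simp add: transpose_diff symmetric_proj_mat)
  have "?Q ** D ** ?Q \<in> elliptope_P P"
    by (intro elliptope_P_if_block_diag_eq_mat1 partition psd_congruence D(2) Q
        block_diag_compl_congruence_fixpoint D(1) assms(2))
  moreover have "(?Q ** D ** ?Q) *v u = 0" if "u \<in> U" for u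
  proof -
    have "?Q *v u = 0"
      using that by (simp add: matrix_vector_mult_diff_rdistrib proj_mat_mult orth_proj_id[OF subspace])
    then show ?thesis by (simp add: matrix_vector_mul_assoc[symmetric])
  qed
  ultimately show ?thesis
    unfolding realizable_def by blast
qed

end

theorem corollary5p11:
  fixes P :: "'n::finite set set" and U :: "(real^'n) set"
  assumes "is_partition P" and "subspace U"
    and "coherence P U < 1/2"
  shows "realizable P U"
proof -
  interpret small_coherence P U
    using assms by unfold_locales
  obtain D where "D \<in> bounded_block_psd P 4" "fixpoint_map D = D"
    by (rule exists_fixpoint)
  then show ?thesis
    by (rule realizable_if_fixpoint)
qed

end
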